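(* Let $\mathbb{W}$ be a subgroup of the finite group $\mathbb{W}_2$ that contains the group $\mathbb{W}_2^{\mathfrak{A}}$, and let $G$ be a $\mathbb{W}$-invariant finite subgroup of $\mathbb{T}_2$. Then there exists $n\in\mathbb{N}$ such that one of the following three possibilities holds: \begin{enumerate} \item $G\cong\mu_n^3$; \item $n$ is even and $G\cong\mu_{n}^2\times\mu_{\frac{n}{2}}$; \item $n$ is even and $G\cong\mu_{n}\times\mu_{\frac{n}{2}}^2$. \end{enumerate} Here $\mu_k$ denotes the cyclic group of order $k$.
   Context: $\mathbb{T}_2=\mathbb{G}_m^3=\mathrm{Spec}\,\mathbb{C}[M_2]$ with $M_2=\mathbb{Z}^3$, and $\mathrm{GL}_3(\mathbb{Z})=\mathrm{GL}(M_2)$ acts on $\mathbb{T}_2$ by group automorphisms (a matrix $A$ acting via $\chi^m\mapsto\chi^{A(m)}$ on characters). $\mathbb{W}_2\subset\mathrm{GL}_3(\mathbb{Z})$ is the group generated by the permutation matrices and the diagonal sign matrices $\mathrm{diag}(-1,1,1)$, $\mathrm{diag}(1,-1,1)$, $\mathrm{diag}(1,1,-1)$; $\mathbb{W}_2\cong\mathfrak{S}_4\times\mu_2$. $\mathbb{W}_2^{\mathfrak{A}}$ is its unique subgroup isomorphic to $\mathfrak{A}_4$, generated by the permutation matrices of order $3$ together with $\mathrm{diag}(-1,-1,1)$ and $\mathrm{diag}(-1,1,-1)$. *)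

theory Defs
  imports "HOL-Analysis.Analysis" "HOL-Algebra.Elementary_Groups"
begin

text \<open>Integer 3x3 matrices are elements of int^3^3; the character lattice M_2 = Z^3
  is int^3 (column vectors). Points of the torus T_2 = G_m^3 are complex^3 with
  nonzero coordinates.\<close>

definition perm_mat :: "(3 \<Rightarrow> 3) \<Rightarrow> int^3^3" where
  "perm_mat \<sigma> = (\<chi> i j. if j = \<sigma> i then 1 else 0)"

definition diag3 :: "int \<Rightarrow> int \<Rightarrow> int \<Rightarrow> int^3^3" where
  "diag3 a b c = (\<chi> i j. if i = j then (if i = 1 then a else if i = 2 then b else c) else 0)"

definition W2_gens :: "(int^3^3) set" where
  "W2_gens = {perm_mat \<sigma> | \<sigma>. \<sigma> permutes (UNIV :: 3 set)}
     \<union> {diag3 (-1) 1 1, diag3 1 (-1) 1, diag3 1 1 (-1)}"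

definition W2A_gens :: "(int^3^3) set" where
  "W2A_gens = {perm_mat \<sigma> | \<sigma>. \<sigma> permutes (UNIV :: 3 set) \<and> \<sigma> \<noteq> id \<and> \<sigma> \<circ> \<sigma> \<circ> \<sigma> = id}
     \<union> {diag3 (-1) (-1) 1, diag3 (-1) 1 (-1)}"

inductive_set gen_group :: "(int^3^3) set \<Rightarrow> (int^3^3) set" for S where
  gen_one: "mat 1 \<in> gen_group S"
| gen_mult: "g \<in> S \<Longrightarrow> A \<in> gen_group S \<Longrightarrow> g ** A \<in> gen_group S"
| gen_inv: "g \<in> S \<Longrightarrow> invertible g \<Longrightarrow> A \<in> gen_group S \<Longrightarrow> matrix_inv g ** A \<in> gen_group S"

definition W2 :: "(int^3^3) set" where "W2 = gen_group W2_gens"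
definition W2A :: "(int^3^3) set" where "W2A = gen_group W2A_gens"

definition torus :: "(complex^3) monoid" where
  "torus = \<lparr>carrier = {t. \<forall>i. t $ i \<noteq> 0},
            monoid.mult = (\<lambda>s t. \<chi> i. s $ i * t $ i),
            one = (\<chi> i. 1)\<rparr>"

text \<open>Action of A in GL(M_2) on T_2 via chi^m |-> chi^(A m):
  the i-th coordinate of the image of t is chi^(A e_i)(t) = prod_j t_j^(A_ji).\<close>
definition act :: "int^3^3 \<Rightarrow> complex^3 \<Rightarrow> complex^3" where
  "act A t = (\<chi> i. \<Prod>j\<in>UNIV. (t $ j) powi (A $ j $ i))"

abbreviation mu :: "nat \<Rightarrow> int monoid" where "mu k \<equiv> integer_mod_group k"

end

theory Submission
  imports Defs
begin

(* Let mu_n be the projection of G to the last coordinate, a finite subgroup of C^*; the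
   cyclic permutation in W2A shows that all coordinates of G lie in mu_n, so
   G = {zeta^v | v in L} with zeta = exp(2 pi i / n) for a lattice n Z^3 <= L <= Z^3.
   L is invariant under the cyclic shift and under (a,b,c) -> (-a,-b,c); adding v and its
   flip gives 2 Z^3 <= L, so L is determined by a shift-invariant subspace of F_2^3 that
   surjects onto a coordinate: all of F_2^3, the even-weight plane, or the line through
   (1,1,1). In the last two cases n is even, and the bases (x, x+y, y+2z) and
   (x, x+2y, x+2z) of L identify G with mu_n^2 x mu_(n/2) and mu_n x mu_(n/2)^2. *)

definition root_unity :: "nat \<Rightarrow> int \<Rightarrow> complex" where
  "root_unity n a = cis (2 * pi * of_int a / of_nat n)"

lemma root_unity_0 [simp]: "root_unity n 0 = 1"
  by (simp add: root_unity_def)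

lemma root_unity_nonzero [simp]: "root_unity n a \<noteq> 0"
  by (simp add: root_unity_def)

lemma root_unity_add: "root_unity n (a + b) = root_unity n a * root_unity n b"
  unfolding root_unity_def by (simp add: cis_mult add_divide_distrib distrib_left)

lemma root_unity_minus: "root_unity n (- a) = inverse (root_unity n a)"
  unfolding root_unity_def by simp

lemma root_unity_eq_1_iff:
  assumes "n > 0"
  shows "root_unity n a = 1 \<longleftrightarrow> int n dvd a"
proof
  assume "root_unity n a = 1"
  then have "cos (2 * pi * of_int a / of_nat n) = 1"
    unfolding root_unity_def by (metis cis.sel(1) one_complex.sel(1))
  then obtain k :: int where "2 * pi * of_int a / of_nat n = of_int k * 2 * pi"
    by (auto simp: cos_one_2pi_int)
  then have "real_of_int a = real_of_int (k * int n)"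
    using assms by (simp add: field_simps)
  then show "int n dvd a"
    by (simp only: of_int_eq_iff) simp
next
  assume "int n dvd a"
  then obtain k where "a = int n * k" by blast
  then show "root_unity n a = 1"
    using assms cis_multiple_2pi[of "of_int k"] unfolding root_unity_def by (simp add: mult.assoc)
qed

lemma root_unity_power: "root_unity n a ^ k = root_unity n (int k * a)"
  by (induction k) (simp_all add: root_unity_add distrib_right)

lemma root_unity_power_eq_1:
  assumes "n > 0"
  shows "root_unity n a ^ n = 1"
  by (simp add: root_unity_power root_unity_eq_1_iff[OF assms])

lemma root_unity_surj:
  assumes "n > 0" "z ^ n = 1"
  obtains a where "z = root_unity n a"
proof -
  obtain k :: nat where "z = cis (2 * pi * real k / real n)"
    using Complex.bij_betw_roots_unity[OF assms(1)] assms(2) by (auto simp: bij_betw_def)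
  then have "z = root_unity n (int k)" by (simp add: root_unity_def)
  then show thesis by (rule that)
qed

lemma mult_closed_power_card_eq_1:
  fixes P :: "'a::field set"
  assumes "finite P" "0 \<notin> P" "\<And>x y. x \<in> P \<Longrightarrow> y \<in> P \<Longrightarrow> x * y \<in> P" "x \<in> P"
  shows "x ^ card P = 1"
proof -
  have inj: "inj_on ((*) x) P"
    using assms(2,4) by (auto simp: inj_on_def)
  have "(*) x ` P = P"
    using assms inj by (intro card_subset_eq) (auto simp: card_image)
  then have "\<Prod>P = (\<Prod>y\<in>P. x * y)"
    using prod.reindex[OF inj, of id] by simp
  also have "\<dots> = x ^ card P * \<Prod>P"
    by (simp add: prod.distrib)
  finally show ?thesis
    using assms(1,2) by (metis mult_cancel_right1 prod_zero_iff)
qed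

lemma finite_mult_closed_eq_roots_unity:
  fixes P :: "complex set"
  assumes "finite P" "P \<noteq> {}" "0 \<notin> P" "\<And>x y. x \<in> P \<Longrightarrow> y \<in> P \<Longrightarrow> x * y \<in> P"
  shows "P = {z. z ^ card P = 1}"
proof (rule card_subset_eq)
  have "card P > 0"
    using assms(1,2) by (simp add: card_gt_0_iff)
  then show "card P = card {z::complex. z ^ card P = 1}"
    by (rule card_roots_unity_eq[symmetric])
  then show "finite {z::complex. z ^ card P = 1}"
    using \<open>card P > 0\<close> card_ge_0_finite by metis
  show "P \<subseteq> {z. z ^ card P = 1}"
    using mult_closed_power_card_eq_1[OF assms(1,3,4)] by blast
qed

definition torsion_point :: "nat \<Rightarrow> int \<times> int \<times> int \<Rightarrow> complex^3" where
  "torsion_point n = (\<lambda>(a, b, c). vector [root_unity n a, root_unity n b, root_unity n c])"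

lemma torsion_point_nth [simp]:
  "torsion_point n (a, b, c) $ 1 = root_unity n a"
  "torsion_point n (a, b, c) $ 2 = root_unity n b"
  "torsion_point n (a, b, c) $ 3 = root_unity n c"
  by (simp_all add: torsion_point_def)

lemma torsion_point_eqI:
  "t $ 1 = root_unity n a \<Longrightarrow> t $ 2 = root_unity n b \<Longrightarrow> t $ 3 = root_unity n c
    \<Longrightarrow> t = torsion_point n (a, b, c)"
  by (simp add: vec_eq_iff forall_3)

lemma torsion_point_add:
  "torsion_point n (u + v) = torsion_point n u \<otimes>\<^bsub>torus\<^esub> torsion_point n v"
  by (cases u, cases v) (simp add: torus_def vec_eq_iff forall_3 root_unity_add)

lemma torsion_point_eq_one_iff:
  assumes "n > 0"
  shows "torsion_point n (a, b, c) = \<one>\<^bsub>torus\<^esub> \<longleftrightarrow> int n dvd a \<and> int n dvd b \<and> int n dvd c"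
  by (simp add: torus_def vec_eq_iff forall_3 root_unity_eq_1_iff[OF assms])

lemma torsion_point_eq_iff:
  "torsion_point n u = torsion_point n v \<longleftrightarrow> torsion_point n (u - v) = \<one>\<^bsub>torus\<^esub>"
proof -
  have "torsion_point n u = torsion_point n (u - v) \<otimes>\<^bsub>torus\<^esub> torsion_point n v"
    by (simp flip: torsion_point_add)
  then show ?thesis
    by (cases v) (auto simp: torus_def vec_eq_iff forall_3)
qed

lemma prod_UNIV_3: "prod f (UNIV :: 3 set) = f 1 * f 2 * f 3"
  unfolding UNIV_3 by (simp add: ac_simps)

lemma perm_mat_nth: "perm_mat s $ i $ j = (if j = s i then 1 else 0)"
  unfolding perm_mat_def by simp

lemma diag3_nth: "diag3 a b c $ i $ j = (if i = j then (if i = 1 then a else if i = 2 then b else c) else 0)"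
  unfolding diag3_def by simp

lemma act_rotation: "act (perm_mat (\<lambda>i. i + 1)) t = vector [t $ 3, t $ 1, t $ 2]"
  unfolding act_def by (simp add: vec_eq_iff forall_3 prod_UNIV_3 perm_mat_nth)

lemma act_sign_flip: "act (diag3 (-1) (-1) 1) t = vector [inverse (t $ 1), inverse (t $ 2), t $ 3]"
  unfolding act_def by (simp add: vec_eq_iff forall_3 prod_UNIV_3 diag3_nth)

lemma act_rotation_torsion_point:
  "act (perm_mat (\<lambda>i. i + 1)) (torsion_point n (a, b, c)) = torsion_point n (c, a, b)"
  by (simp add: act_rotation torsion_point_def)

lemma act_sign_flip_torsion_point:
  "act (diag3 (-1) (-1) 1) (torsion_point n (a, b, c)) = torsion_point n (-a, -b, c)"
  by (simp add: act_sign_flip torsion_point_def root_unity_minus)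

lemma gen_group_generator: "g \<in> S \<Longrightarrow> g \<in> gen_group S"
  using gen_group.gen_mult[OF _ gen_group.gen_one] by fastforce

lemma rotation_in_W2A: "perm_mat (\<lambda>i::3. i + 1) \<in> W2A"
proof -
  have "(\<lambda>i::3. i + 1) permutes UNIV"
    by (rule bij_imp_permutes) (auto simp: bij_def inj_def surj_def intro: exI[of _ "_ - 1"])
  then show ?thesis
    unfolding W2A_def W2A_gens_def
    by (intro gen_group_generator) (auto simp: fun_eq_iff intro!: exI[of _ "\<lambda>i::3. i + 1"])
qed

lemma sign_flip_in_W2A: "diag3 (-1) (-1) 1 \<in> W2A"
  unfolding W2A_def W2A_gens_def by (intro gen_group_generator) simp

lemma finite_torus_subgroup_coordinate_roots_unity:
  assumes G: "subgroup G torus" "finite G"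
  obtains n where "n > 0" "(\<lambda>g. g $ i) ` G = {z. z ^ n = 1}"
proof -
  define P where "P = (\<lambda>g. g $ i) ` G"
  have "(\<chi> i. 1) \<in> G"
    using subgroup.one_closed[OF G(1)] by (simp add: torus_def)
  then have "finite P" "P \<noteq> {}"
    using G(2) by (auto simp: P_def)
  moreover have "0 \<notin> P"
    using subgroup.subset[OF G(1)] by (auto simp: P_def torus_def)
  moreover have "x * y \<in> P" if xy: "x \<in> P" "y \<in> P" for x y
  proof -
    obtain g h where "g \<in> G" "h \<in> G" "x = g $ i" "y = h $ i"
      using xy unfolding P_def by blast
    moreover have "(\<chi> i. g $ i * h $ i) \<in> G"
      using subgroup.m_closed[OF G(1) \<open>g \<in> G\<close> \<open>h \<in> G\<close>] by (simp add: torus_def)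
    ultimately show ?thesis
      unfolding P_def by (metis (no_types, lifting) image_eqI vec_lambda_beta)
  qed
  ultimately have "P = {z. z ^ card P = 1}" "card P > 0"
    by (simp_all add: finite_mult_closed_eq_roots_unity card_gt_0_iff)
  then show thesis
    using that unfolding P_def by blast
qed

lemma rotation_invariant_finite_subgroup_torsion:
  assumes G: "subgroup G torus" "finite G"
    and rotate: "\<And>g. g \<in> G \<Longrightarrow> vector [g $ 3, g $ 1, g $ 2] \<in> G"
  obtains n where "n > 0" "G \<subseteq> range (torsion_point n)"
    and "\<And>c. \<exists>a b. torsion_point n (a, b, c) \<in> G"
proof -
  obtain n where "n > 0" and roots: "(\<lambda>g. g $ 3) ` G = {z. z ^ n = 1}"
    using finite_torus_subgroup_coordinate_roots_unity[OF G] by blast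
  have "g $ 3 ^ n = 1 \<and> g $ 2 ^ n = 1 \<and> g $ 1 ^ n = 1" if "g \<in> G" for g
    using imageI[OF that, of "\<lambda>g. g $ 3"] imageI[OF rotate[OF that], of "\<lambda>g. g $ 3"]
      imageI[OF rotate[OF rotate[OF that]], of "\<lambda>g. g $ 3"]
    unfolding roots by simp
  then have "g $ i ^ n = 1" if "g \<in> G" for g i
    using exhaust_3[of i] that by auto
  then have coord_root: "\<exists>a. g $ i = root_unity n a" if "g \<in> G" for g i
    using root_unity_surj[OF \<open>n > 0\<close>] that by metis
  have torsion_coords: "\<exists>a b. g = torsion_point n (a, b, c)"
    if "g \<in> G" "g $ 3 = root_unity n c" for g c
  proof -
    obtain a b where "g $ 1 = root_unity n a" "g $ 2 = root_unity n b"
      using coord_root[OF \<open>g \<in> G\<close>] by blast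
    then have "g = torsion_point n (a, b, c)"
      using that(2) by (rule torsion_point_eqI)
    then show ?thesis by blast
  qed
  have "G \<subseteq> range (torsion_point n)"
  proof
    fix g assume "g \<in> G"
    obtain c where "g $ 3 = root_unity n c"
      using coord_root[OF \<open>g \<in> G\<close>] by blast
    then obtain a b where "g = torsion_point n (a, b, c)"
      using torsion_coords[OF \<open>g \<in> G\<close>] by blast
    then show "g \<in> range (torsion_point n)" by simp
  qed
  moreover have "\<exists>a b. torsion_point n (a, b, c) \<in> G" for c
  proof -
    have "root_unity n c \<in> (\<lambda>g. g $ 3) ` G"
      by (simp add: roots root_unity_power_eq_1[OF \<open>n > 0\<close>])
    then obtain g where g: "g \<in> G" "g $ 3 = root_unity n c"
      by auto
    then obtain a b where "g = torsion_point n (a, b, c)"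
      using torsion_coords by blast
    with g(1) show ?thesis by blast
  qed
  ultimately show thesis
    using \<open>n > 0\<close> that by blast
qed

lemma parity_determined_set_eq:
  fixes L :: "(int \<times> int \<times> int) set"
  assumes "\<And>a b c. (a, b, c) \<in> L \<longleftrightarrow> (a mod 2, b mod 2, c mod 2) \<in> L"
    and "\<And>a b c. Q a b c \<longleftrightarrow> Q (a mod 2) (b mod 2) (c mod 2)"
    and "\<And>a b c. a \<in> {0, 1} \<Longrightarrow> b \<in> {0, 1} \<Longrightarrow> c \<in> {0, 1} \<Longrightarrow> (a, b, c) \<in> L \<longleftrightarrow> Q a b c"
  shows "L = {(a, b, c). Q a b c}"
proof -
  have "x mod 2 \<in> {0, 1}" for x :: int
    by auto
  then show ?thesis
    using assms by auto
qed

locale rotation_invariant_lattice =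
  fixes L :: "(int \<times> int \<times> int) set"
  assumes add: "\<And>u v. u \<in> L \<Longrightarrow> v \<in> L \<Longrightarrow> u + v \<in> L"
    and rotate: "\<And>a b c. (a, b, c) \<in> L \<Longrightarrow> (c, a, b) \<in> L"
    and double: "\<And>a b c. (2 * a, 2 * b, 2 * c) \<in> L"
begin

lemma mod_2_iff: "(a, b, c) \<in> L \<longleftrightarrow> (a mod 2, b mod 2, c mod 2) \<in> L"
proof
  assume "(a, b, c) \<in> L"
  from add[OF this double[of "- (a div 2)" "- (b div 2)" "- (c div 2)"]]
  show "(a mod 2, b mod 2, c mod 2) \<in> L"
    by (simp add: minus_mult_div_eq_mod)
next
  assume "(a mod 2, b mod 2, c mod 2) \<in> L"
  from add[OF this double[of "a div 2" "b div 2" "c div 2"]]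
  show "(a, b, c) \<in> L" by simp
qed

lemma zero_mem: "(0, 0, 0) \<in> L"
  using double[of 0 0 0] by simp

lemma eq_UNIV_if_unit:
  assumes "(1, 0, 0) \<in> L"
  shows "L = UNIV"
proof -
  have "(0, 1, 0) \<in> L" "(0, 0, 1) \<in> L"
    using assms rotate by blast+
  moreover from this have "(1, 1, 0) \<in> L"
    using add[OF assms] by fastforce
  moreover from calculation have "(1, 1, 1) \<in> L" "(0, 1, 1) \<in> L" "(1, 0, 1) \<in> L"
    using add[OF _ \<open>(0, 0, 1) \<in> L\<close>, of "(1, 1, 0)"] rotate by (simp, blast, blast)
  ultimately have "L = {(a, b, c). True}"
    by (intro parity_determined_set_eq[OF mod_2_iff]) (use assms zero_mem in auto)
  then show ?thesis by auto
qed

lemma eq_even_sum: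
  assumes "(1, 0, 0) \<notin> L" "(1, 1, 0) \<in> L"
  shows "L = {(a, b, c). even (a + b + c)}"
proof -
  have "(0, 1, 0) \<notin> L" "(0, 0, 1) \<notin> L" "(0, 1, 1) \<in> L" "(1, 0, 1) \<in> L"
    using assms rotate by blast+
  moreover have "(1, 1, 1) \<notin> L"
  proof
    assume "(1, 1, 1) \<in> L"
    from add[OF this \<open>(1, 1, 0) \<in> L\<close>] have "(0, 0, 1) \<in> L"
      using mod_2_iff[of 2 2 1] by simp
    with \<open>(0, 0, 1) \<notin> L\<close> show False ..
  qed
  ultimately show ?thesis
    by (intro parity_determined_set_eq[OF mod_2_iff]) (use assms zero_mem in auto)
qed

lemma eq_equal_parity:
  assumes "(1, 0, 0) \<notin> L" "(1, 1, 0) \<notin> L" "(x, y, 1) \<in> L"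
  shows "L = {(a, b, c). even (b - a) \<and> even (c - a)}"
proof -
  have "(0, 1, 0) \<notin> L" "(0, 0, 1) \<notin> L" "(0, 1, 1) \<notin> L" "(1, 0, 1) \<notin> L"
    using assms rotate by blast+
  moreover have "(1, 1, 1) \<in> L"
  proof -
    have "(x mod 2, y mod 2, 1) \<in> L"
      using assms(3) mod_2_iff[of x y 1] by simp
    moreover have "z mod 2 = 0 \<or> z mod 2 = 1" for z :: int
      by presburger
    ultimately show ?thesis
      using assms(1,2) \<open>(0, 0, 1) \<notin> L\<close> \<open>(0, 1, 1) \<notin> L\<close> \<open>(1, 0, 1) \<notin> L\<close> by metis
  qed
  ultimately show ?thesis
    by (intro parity_determined_set_eq[OF mod_2_iff]) (use assms zero_mem in auto)
qed

lemma classification: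
  assumes "(x, y, 1) \<in> L"
  shows "L = UNIV \<or> L = {(a, b, c). even (a + b + c)} \<or> L = {(a, b, c). even (b - a) \<and> even (c - a)}"
  using eq_UNIV_if_unit eq_even_sum eq_equal_parity[OF _ _ assms] by blast

end

lemma rotation_flip_invariant_lattice_cases:
  fixes L :: "(int \<times> int \<times> int) set"
  assumes add: "\<And>u v. u \<in> L \<Longrightarrow> v \<in> L \<Longrightarrow> u + v \<in> L"
    and rotate: "\<And>a b c. (a, b, c) \<in> L \<Longrightarrow> (c, a, b) \<in> L"
    and flip: "\<And>a b c. (a, b, c) \<in> L \<Longrightarrow> (-a, -b, c) \<in> L"
    and onto: "\<And>c. \<exists>a b. (a, b, c) \<in> L"
  shows "L = UNIV \<or> L = {(a, b, c). even (a + b + c)} \<or> L = {(a, b, c). even (b - a) \<and> even (c - a)}"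
proof -
  have last_double: "(0, 0, 2 * c) \<in> L" for c
  proof -
    obtain a b where "(a, b, c) \<in> L"
      using onto by blast
    from add[OF this flip[OF this]] show ?thesis by simp
  qed
  have "(2 * a, 2 * b, 2 * c) \<in> L" for a b c
    using add[OF add[OF rotate[OF last_double] rotate[OF rotate[OF last_double]]] last_double]
    by simp
  then interpret rotation_invariant_lattice L
    using add rotate by unfold_locales
  obtain a b where "(a, b, 1) \<in> L"
    using onto by blast
  then show ?thesis
    by (rule classification)
qed

lemma eq_if_dvd_diff_in_range:
  fixes x y k :: int
  assumes "x \<in> {0..<k}" "y \<in> {0..<k}" "k dvd x - y"
  shows "x = y"
  using assms by (metis atLeastLessThan_iff mod_eq_dvd_iff mod_pos_pos_trivial)

lemma torsion_point_linear_eq_iff: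
  fixes f :: "int \<times> int \<times> int \<Rightarrow> int \<times> int \<times> int"
  assumes f_add: "\<And>u v. f (u + v) = f u + f v"
    and f_kernel: "\<And>x y z. torsion_point n (f (x, y, z)) = \<one>\<^bsub>torus\<^esub>
      \<longleftrightarrow> int k1 dvd x \<and> int k2 dvd y \<and> int k3 dvd z"
  shows "torsion_point n (f (x, y, z)) = torsion_point n (f (x', y', z'))
    \<longleftrightarrow> int k1 dvd x - x' \<and> int k2 dvd y - y' \<and> int k3 dvd z - z'"
proof -
  have "f (x, y, z) - f (x', y', z') = f (x - x', y - y', z - z')"
    using f_add[of "(x - x', y - y', z - z')" "(x', y', z')"] by simp
  then show ?thesis
    unfolding torsion_point_eq_iff by (simp add: f_kernel)
qed

lemma torsion_image_iso_DirProd: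
  fixes f :: "int \<times> int \<times> int \<Rightarrow> int \<times> int \<times> int"
  assumes k: "k1 > 0" "k2 > 0" "k3 > 0"
    and f_add: "\<And>u v. f (u + v) = f u + f v"
    and f_kernel: "\<And>x y z. torsion_point n (f (x, y, z)) = \<one>\<^bsub>torus\<^esub>
      \<longleftrightarrow> int k1 dvd x \<and> int k2 dvd y \<and> int k3 dvd z"
  shows "torus\<lparr>carrier := torsion_point n ` range f\<rparr> \<cong> mu k1 \<times>\<times> mu k2 \<times>\<times> mu k3"
proof -
  let ?H = "mu k1 \<times>\<times> mu k2 \<times>\<times> mu k3"
  let ?T = "torus\<lparr>carrier := torsion_point n ` range f\<rparr>"
  define \<phi> where "\<phi> v = torsion_point n (f v)" for v
  note \<phi>_eq_iff = torsion_point_linear_eq_iff[OF f_add f_kernel, folded \<phi>_def]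
  have \<phi>_add: "\<phi> (u + v) = \<phi> u \<otimes>\<^bsub>torus\<^esub> \<phi> v" for u v
    by (simp add: \<phi>_def f_add torsion_point_add)
  have \<phi>_mod: "\<phi> (x mod int k1, y mod int k2, z mod int k3) = \<phi> (x, y, z)" for x y z
    unfolding \<phi>_eq_iff by (simp add: mod_eq_dvd_iff[symmetric])
  have carrier_H: "carrier ?H = {0..<int k1} \<times> {0..<int k2} \<times> {0..<int k3}"
    using k by (simp add: carrier_integer_mod_group)
  have "\<phi> \<in> hom ?H ?T"
  proof (rule homI)
    show "\<phi> x \<in> carrier ?T" for x
      by (simp add: \<phi>_def)
    show "\<phi> (x \<otimes>\<^bsub>?H\<^esub> y) = \<phi> x \<otimes>\<^bsub>?T\<^esub> \<phi> y" for x y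
      using \<phi>_mod[of "fst x + fst y" "fst (snd x) + fst (snd y)" "snd (snd x) + snd (snd y)"]
        \<phi>_add[of x y]
      by (cases x, cases y) simp
  qed
  moreover have "\<phi> ` carrier ?H = carrier ?T"
  proof
    show "carrier ?T \<subseteq> \<phi> ` carrier ?H"
    proof
      fix t assume "t \<in> carrier ?T"
      then obtain x y z where "t = \<phi> (x, y, z)"
        by (auto simp: \<phi>_def)
      moreover have "(x mod int k1, y mod int k2, z mod int k3) \<in> carrier ?H"
        using k carrier_H by simp
      ultimately show "t \<in> \<phi> ` carrier ?H"
        using \<phi>_mod[of x y z] by (metis image_eqI)
    qed
  qed (auto simp: \<phi>_def)
  moreover have "inj_on \<phi> (carrier ?H)"
    unfolding inj_on_def carrier_H
    by (auto simp: \<phi>_eq_iff intro: eq_if_dvd_diff_in_range)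
  ultimately have "?H \<cong> ?T"
    using is_isoI iso_iff by blast
  then show ?thesis
    by (simp add: DirProd_group group.iso_sym)
qed

lemma range_even_sum:
  "range (\<lambda>(x, y, z). (x, x + y, y + 2 * z)) = {(a, b, c :: int). even (a + b + c)}"
proof (intro subset_antisym subsetI)
  fix v :: "int \<times> int \<times> int"
  assume "v \<in> {(a, b, c). even (a + b + c)}"
  then obtain a b c where v: "v = (a, b, c)" and "even (c - b + a)" by auto
  then obtain k where "c - b + a = 2 * k" by (elim evenE)
  then have "v = (\<lambda>(x, y, z). (x, x + y, y + 2 * z)) (a, b - a, k)"
    using v by simp
  then show "v \<in> range (\<lambda>(x, y, z). (x, x + y, y + 2 * z))" by (rule image_eqI) simp
qed auto

lemma range_equal_parity:
  "range (\<lambda>(x, y, z). (x, x + 2 * y, x + 2 * z)) = {(a, b, c :: int). even (b - a) \<and> even (c - a)}"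
proof (intro subset_antisym subsetI)
  fix v :: "int \<times> int \<times> int"
  assume "v \<in> {(a, b, c). even (b - a) \<and> even (c - a)}"
  then obtain a b c where v: "v = (a, b, c)" and "even (b - a)" "even (c - a)" by auto
  then obtain k l where "b - a = 2 * k" "c - a = 2 * l" by (meson evenE)
  with v have "v = (\<lambda>(x, y, z). (x, x + 2 * y, x + 2 * z)) (a, k, l)"
    by simp
  then show "v \<in> range (\<lambda>(x, y, z). (x, x + 2 * y, x + 2 * z))" by (rule image_eqI) simp
qed auto

lemma torsion_full_iso:
  assumes "n > 0"
  shows "torus\<lparr>carrier := range (torsion_point n)\<rparr> \<cong> mu n \<times>\<times> mu n \<times>\<times> mu n"
  using torsion_image_iso_DirProd[OF assms assms assms, of id n]
  by (simp add: torsion_point_eq_one_iff[OF assms])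

lemma torsion_even_sum_iso:
  assumes "n > 0" "even n"
  shows "torus\<lparr>carrier := torsion_point n ` {(a, b, c). even (a + b + c)}\<rparr>
    \<cong> mu n \<times>\<times> mu n \<times>\<times> mu (n div 2)"
proof -
  obtain m where n: "n = 2 * m" and "m > 0"
    using assms by (auto elim: evenE)
  let ?f = "\<lambda>(x, y, z). (x, x + y, y + 2 * z) :: int \<times> int \<times> int"
  have "torus\<lparr>carrier := torsion_point (2 * m) ` range ?f\<rparr> \<cong> mu (2 * m) \<times>\<times> mu (2 * m) \<times>\<times> mu m"
  proof (rule torsion_image_iso_DirProd)
    show "?f (u + v) = ?f u + ?f v" for u v
      by (cases u, cases v) simp
    show "torsion_point (2 * m) (?f (x, y, z)) = \<one>\<^bsub>torus\<^esub>
        \<longleftrightarrow> int (2 * m) dvd x \<and> int (2 * m) dvd y \<and> int m dvd z" for x y z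
      using \<open>m > 0\<close> by (auto simp: torsion_point_eq_one_iff dvd_add_right_iff)
  qed (use \<open>m > 0\<close> in auto)
  then show ?thesis
    unfolding n range_even_sum by simp
qed

lemma torsion_equal_parity_iso:
  assumes "n > 0" "even n"
  shows "torus\<lparr>carrier := torsion_point n ` {(a, b, c). even (b - a) \<and> even (c - a)}\<rparr>
    \<cong> mu n \<times>\<times> mu (n div 2) \<times>\<times> mu (n div 2)"
proof -
  obtain m where n: "n = 2 * m" and "m > 0"
    using assms by (auto elim: evenE)
  let ?f = "\<lambda>(x, y, z). (x, x + 2 * y, x + 2 * z) :: int \<times> int \<times> int"
  have "torus\<lparr>carrier := torsion_point (2 * m) ` range ?f\<rparr> \<cong> mu (2 * m) \<times>\<times> mu m \<times>\<times> mu m"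
  proof (rule torsion_image_iso_DirProd)
    show "?f (u + v) = ?f u + ?f v" for u v
      by (cases u, cases v) simp
    show "torsion_point (2 * m) (?f (x, y, z)) = \<one>\<^bsub>torus\<^esub>
        \<longleftrightarrow> int (2 * m) dvd x \<and> int m dvd y \<and> int m dvd z" for x y z
      using \<open>m > 0\<close> by (auto simp: torsion_point_eq_one_iff dvd_add_right_iff)
  qed (use \<open>m > 0\<close> in auto)
  then show ?thesis
    unfolding n range_equal_parity by simp
qed

lemma W2A_invariant_finite_subgroup_cases:
  assumes G: "subgroup G torus" "finite G"
    and invariant: "\<And>A g. A \<in> W2A \<Longrightarrow> g \<in> G \<Longrightarrow> act A g \<in> G"
  obtains n where "n > 0"
    and "G = range (torsion_point n)
      \<or> even n \<and> G = torsion_point n ` {(a, b, c). even (a + b + c)}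
      \<or> even n \<and> G = torsion_point n ` {(a, b, c). even (b - a) \<and> even (c - a)}"
proof -
  have "vector [g $ 3, g $ 1, g $ 2] \<in> G" if "g \<in> G" for g
    using invariant[OF rotation_in_W2A that] by (simp only: act_rotation)
  then obtain n where "n > 0" and G_torsion: "G \<subseteq> range (torsion_point n)"
    and onto: "\<And>c. \<exists>a b. torsion_point n (a, b, c) \<in> G"
    using rotation_invariant_finite_subgroup_torsion[OF G] by blast
  define L where "L = {v. torsion_point n v \<in> G}"
  have G_eq: "G = torsion_point n ` L"
    using G_torsion by (auto simp: L_def)
  have "torsion_point n (int n, 0, 0) = \<one>\<^bsub>torus\<^esub>"
    by (simp add: torsion_point_eq_one_iff[OF \<open>n > 0\<close>])
  then have n_in_L: "(int n, 0, 0) \<in> L"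
    using subgroup.one_closed[OF G(1)] by (simp add: L_def)
  have "L = UNIV \<or> L = {(a, b, c). even (a + b + c)} \<or> L = {(a, b, c). even (b - a) \<and> even (c - a)}"
  proof (rule rotation_flip_invariant_lattice_cases)
    show "u + v \<in> L" if "u \<in> L" "v \<in> L" for u v
      using that subgroup.m_closed[OF G(1)] by (simp add: L_def torsion_point_add)
    show "(c, a, b) \<in> L" if "(a, b, c) \<in> L" for a b c
      using invariant[OF rotation_in_W2A, of "torsion_point n (a, b, c)"] that
      by (simp add: L_def act_rotation_torsion_point)
    show "(- a, - b, c) \<in> L" if "(a, b, c) \<in> L" for a b c
      using invariant[OF sign_flip_in_W2A, of "torsion_point n (a, b, c)"] that
      by (simp add: L_def act_sign_flip_torsion_point)
    show "\<exists>a b. (a, b, c) \<in> L" for c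
      using onto by (simp add: L_def)
  qed
  then show thesis
  proof (elim disjE)
    assume "L = UNIV"
    then show thesis
      using G_eq by (intro that[OF \<open>n > 0\<close>] disjI1) simp
  next
    assume L: "L = {(a, b, c). even (a + b + c)}"
    then have "even n \<and> G = torsion_point n ` {(a, b, c). even (a + b + c)}"
      using n_in_L G_eq by simp
    then show thesis
      by (rule that[OF \<open>n > 0\<close>, OF disjI2, OF disjI1])
  next
    assume L: "L = {(a, b, c). even (b - a) \<and> even (c - a)}"
    then have "even n \<and> G = torsion_point n ` {(a, b, c). even (b - a) \<and> even (c - a)}"
      using n_in_L G_eq by simp
    then show thesis
      by (rule that[OF \<open>n > 0\<close>, OF disjI2, OF disjI2])
  qed
qed

theorem lemma7p1:
  fixes W :: "(int^3^3) set" and G :: "(complex^3) set"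
  assumes W_one: "mat 1 \<in> W"
    and W_mult: "\<forall>A\<in>W. \<forall>B\<in>W. A ** B \<in> W"
    and W_inv: "\<forall>A\<in>W. \<exists>B\<in>W. A ** B = mat 1"
    and W_sub: "W \<subseteq> W2"
    and W_sup: "W2A \<subseteq> W"
    and G_sub: "subgroup G torus"
    and G_fin: "finite G"
    and G_inv: "\<forall>A\<in>W. \<forall>g\<in>G. act A g \<in> G"
  shows "\<exists>n::nat. n > 0 \<and>
           (torus\<lparr>carrier := G\<rparr> \<cong> mu n \<times>\<times> mu n \<times>\<times> mu n
            \<or> (even n \<and> torus\<lparr>carrier := G\<rparr> \<cong> mu n \<times>\<times> mu n \<times>\<times> mu (n div 2))
            \<or> (even n \<and> torus\<lparr>carrier := G\<rparr> \<cong> mu n \<times>\<times> mu (n div 2) \<times>\<times> mu (n div 2)))"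
proof -
  have invariant: "act A g \<in> G" if "A \<in> W2A" "g \<in> G" for A g
    using G_inv W_sup that by blast
  obtain n where "n > 0"
    and "G = range (torsion_point n)
      \<or> even n \<and> G = torsion_point n ` {(a, b, c). even (a + b + c)}
      \<or> even n \<and> G = torsion_point n ` {(a, b, c). even (b - a) \<and> even (c - a)}"
    by (rule W2A_invariant_finite_subgroup_cases[OF G_sub G_fin invariant])
  then have "torus\<lparr>carrier := G\<rparr> \<cong> mu n \<times>\<times> mu n \<times>\<times> mu n
      \<or> (even n \<and> torus\<lparr>carrier := G\<rparr> \<cong> mu n \<times>\<times> mu n \<times>\<times> mu (n div 2))
      \<or> (even n \<and> torus\<lparr>carrier := G\<rparr> \<cong> mu n \<times>\<times> mu (n div 2) \<times>\<times> mu (n div 2))"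
    using torsion_full_iso[OF \<open>n > 0\<close>] torsion_even_sum_iso[OF \<open>n > 0\<close>]
      torsion_equal_parity_iso[OF \<open>n > 0\<close>]
    by (elim disjE conjE) simp_all
  with \<open>n > 0\<close> show ?thesis by blast
qed

end
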